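(* Let $\mathbb{F}$ be a field of characteristic zero, $d\ge 2$, $n=2d-2$, $P_n=\mathbb{F}[x_1,\dots,x_n]$ and $I_n=\big(x_1^2,\dots,x_n^2,(x_1+\cdots+x_n)^2\big)$; let $\mathrm{in}(I_n)$ be its initial ideal with respect to the reverse lexicographic order. If $\mu\in P_n$ is a monomial with $\deg(\mu)\le d-2$ and $\mu\notin\mathrm{in}(I_n)$, then there exists a monomial $\widetilde{\mu}\in P_n$ which is a multiple of $\mu$, with $\deg(\widetilde\mu)=\deg(\mu)+1$ and $\widetilde\mu\notin\mathrm{in}(I_n)$.
   Context: The reverse lexicographic order is taken with $x_1>x_2>\cdots>x_n$. *)

theory Defs
  imports "HOL-Library.Poly_Mapping"
begin

text \<open>Variables x_1,...,x_n are indexed by 0,...,n-1 (x_(i+1) has index i).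
  Monomials are finitely supported exponent vectors; polynomials with
  coefficients in a field are finitely supported maps monomial to coefficient, with convolution product.\<close>

type_synonym monom = "nat \<Rightarrow>\<^sub>0 nat"
type_synonym 'a mpoly = "monom \<Rightarrow>\<^sub>0 'a"

definition mdeg :: "monom \<Rightarrow> nat" where
  "mdeg m = (\<Sum>i\<in>Poly_Mapping.keys m. Poly_Mapping.lookup m i)"

definition mon :: "monom \<Rightarrow> 'a::comm_ring_1 mpoly" where
  "mon m = Poly_Mapping.single m 1"

definition var :: "nat \<Rightarrow> 'a::comm_ring_1 mpoly" where
  "var i = mon (Poly_Mapping.single i 1)"

definition Pn :: "nat \<Rightarrow> 'a::comm_ring_1 mpoly set" where
  "Pn n = {p. \<forall>m\<in>Poly_Mapping.keys p. Poly_Mapping.keys m \<subseteq> {..<n}}"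

definition is_monomial_in :: "nat \<Rightarrow> monom \<Rightarrow> bool" where
  "is_monomial_in n m \<longleftrightarrow> Poly_Mapping.keys m \<subseteq> {..<n}"

definition gen_ideal :: "nat \<Rightarrow> 'a::comm_ring_1 mpoly set \<Rightarrow> 'a mpoly set" where
  "gen_ideal n S = {p. \<exists>F c. finite F \<and> F \<subseteq> S \<and> (\<forall>f\<in>F. c f \<in> Pn n)
                          \<and> p = (\<Sum>f\<in>F. c f * f)}"

text \<open>(Degree) reverse lexicographic order with x_1 > x_2 > ... > x_n:
  a < b iff deg a < deg b, or the degrees agree and at the last variable where
  the exponents differ, a has the larger exponent.\<close>
definition revlex_less :: "monom \<Rightarrow> monom \<Rightarrow> bool" where
  "revlex_less a b \<longleftrightarrow> mdeg a < mdeg b \<or>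
     (mdeg a = mdeg b \<and> a \<noteq> b \<and>
       (let i = Max {i. Poly_Mapping.lookup a i \<noteq> Poly_Mapping.lookup b i} in Poly_Mapping.lookup b i < Poly_Mapping.lookup a i))"

definition lead_mon :: "'a::zero mpoly \<Rightarrow> monom" where
  "lead_mon p = (THE m. m \<in> Poly_Mapping.keys p \<and> (\<forall>m'\<in>Poly_Mapping.keys p. m' \<noteq> m \<longrightarrow> revlex_less m' m))"

definition initial_ideal :: "nat \<Rightarrow> 'a::comm_ring_1 mpoly set \<Rightarrow> 'a mpoly set" where
  "initial_ideal n I = gen_ideal n {mon (lead_mon p) | p. p \<in> I \<and> p \<noteq> 0}"

definition In :: "nat \<Rightarrow> 'a::comm_ring_1 mpoly set" where
  "In n = gen_ideal n (insert ((\<Sum>i<n. var i) ^ 2) {var i ^ 2 | i. i < n})"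

end

theory Submission
  imports Defs
begin

text \<open>
  Squares of variables lie in \<open>I\<^sub>n\<close>, so a monomial outside \<open>in(I\<^sub>n)\<close> is a squarefree
  \<open>x\<^sup>S\<close>. Whether \<open>x\<^sup>S \<in> in(I\<^sub>n)\<close> is decided by a ballot condition: \<open>S\<close> occupies at most
  \<open>(p + 1)/2\<close> of the first \<open>p\<close> variables whenever \<open>x\<^sub>p \<in> S\<close>.

  If the condition fails at \<open>x\<^sub>p\<close>, let \<open>R\<close> be the part of \<open>S\<close> among the first \<open>p\<close> variables.
  A combination of the squarefree parts of \<open>x\<^sup>P \<ell>\<^sup>2\<close>, \<open>\<ell> = x\<^sub>1 + \<dots> + x\<^sub>n\<close>, over the
  \<open>P\<close> with \<open>|P| = |R| - 2\<close> among the first \<open>p\<close> variables, with coefficients depending only on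
  \<open>|P \<inter> R|\<close>, has coefficient \<open>[Q = R]\<close> at every \<open>x\<^sup>Q\<close> of that support with \<open>|Q| = |R|\<close>; all its other
  monomials involve a later variable and are smaller, so \<open>x\<^sup>R\<close>, hence \<open>x\<^sup>S\<close>, lies in
  \<open>in(I\<^sub>n)\<close>.

  If the condition holds, every element but one of \<open>S\<close> can be matched with a smaller variable
  outside \<open>S\<close>. The signed indicator of the monomials obtained from \<open>x\<^sup>S\<close> by trading
  matched elements for their partners is a linear functional that kills \<open>I\<^sub>n\<close> (it vanishes
  on non-squarefree monomials, and swapping a partner is a sign-reversing involution on the terms
  of \<open>x\<^sup>M \<ell>\<^sup>2\<close>), equals \<open>1\<close> at \<open>x\<^sup>S\<close> and vanishes below it; hence
  \<open>x\<^sup>S \<notin> in(I\<^sub>n)\<close>.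

  Finally, when \<open>2|S| + 2 \<le> n\<close>, adding the last variable outside a ballot set \<open>S\<close> keeps
  it ballot, which yields the required multiple of \<open>\<mu>\<close>.
\<close>

alias lookup = Poly_Mapping.lookup
alias keys = Poly_Mapping.keys

lemma mdeg_eq_sum: "finite K \<Longrightarrow> keys m \<subseteq> K \<Longrightarrow> mdeg m = (\<Sum>i\<in>K. lookup m i)"
  unfolding mdeg_def by (rule sum.mono_neutral_left) (auto simp: not_in_keys_iff_lookup_eq_zero)

lemma mdeg_add: "mdeg (a + b) = mdeg a + mdeg b"
proof -
  let ?K = "keys a \<union> keys b"
  have "mdeg (a + b) = (\<Sum>i\<in>?K. lookup (a + b) i)"
    by (rule mdeg_eq_sum) (use keys_add[of a b] in auto)
  also have "\<dots> = (\<Sum>i\<in>?K. lookup a i) + (\<Sum>i\<in>?K. lookup b i)"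
    by (simp add: lookup_add sum.distrib)
  also have "\<dots> = mdeg a + mdeg b"
    using mdeg_eq_sum[of ?K a] mdeg_eq_sum[of ?K b] by simp
  finally show ?thesis .
qed

lemma keys_add_monom: "keys ((a::monom) + b) = keys a \<union> keys b"
  by (auto simp: lookup_add simp flip: lookup_not_eq_zero_eq_in_keys)

definition var_monom :: "nat \<Rightarrow> monom" where
  "var_monom i = Poly_Mapping.single i 1"

lemma keys_var_monom [simp]: "keys (var_monom i) = {i}"
  by (simp add: var_monom_def)

lemma lookup_var_monom: "lookup (var_monom i) k = (if k = i then 1 else 0)"
  by (simp add: var_monom_def lookup_single)

lemma mdeg_var_monom [simp]: "mdeg (var_monom i) = 1"
  by (simp add: mdeg_def lookup_var_monom)

lemma var_eq_mon: "var i = mon (var_monom i)"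
  by (simp add: var_def var_monom_def)

lemma mon_add: "mon (a + b) = (mon a * mon b :: 'a::comm_ring_1 mpoly)"
  by (simp add: mon_def mult_single)

lemma lookup_mon: "lookup (mon M :: 'a::comm_ring_1 mpoly) N = (if M = N then 1 else 0)"
  by (simp add: mon_def lookup_single when_def)

lemma monom_split_square:
  assumes "lookup M i \<ge> 2"
  obtains M' where "M = M' + (var_monom i + var_monom i)" "keys M' \<subseteq> keys M"
proof
  show eq: "M = (M - var_monom i - var_monom i) + (var_monom i + var_monom i)"
    by (rule poly_mapping_eqI) (use assms in \<open>simp add: lookup_add lookup_minus lookup_var_monom\<close>)
  show "keys (M - var_monom i - var_monom i) \<subseteq> keys M"
    by (subst (2) eq) (auto simp: keys_add_monom)
qed

definition monom_of_set :: "nat set \<Rightarrow> monom" where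
  "monom_of_set A = (\<Sum>i\<in>A. var_monom i)"

lemma lookup_monom_of_set: "finite A \<Longrightarrow> lookup (monom_of_set A) k = (if k \<in> A then 1 else 0)"
  by (simp add: monom_of_set_def lookup_sum lookup_var_monom)

lemma keys_monom_of_set: "finite A \<Longrightarrow> keys (monom_of_set A) = A"
  by (auto simp: lookup_monom_of_set in_keys_iff split: if_splits)

lemma mdeg_monom_of_set: "finite A \<Longrightarrow> mdeg (monom_of_set A) = card A"
  by (simp add: mdeg_def keys_monom_of_set lookup_monom_of_set)

lemma monom_of_set_insert: "finite A \<Longrightarrow> x \<notin> A \<Longrightarrow> monom_of_set (insert x A) = var_monom x + monom_of_set A"
  by (simp add: monom_of_set_def)

lemma monom_of_set_union:
  "finite A \<Longrightarrow> finite B \<Longrightarrow> A \<inter> B = {} \<Longrightarrow> monom_of_set (A \<union> B) = monom_of_set A + monom_of_set B"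
  by (simp add: monom_of_set_def sum.union_disjoint)

lemma monom_of_set_inject:
  assumes "finite A" "finite B"
  shows "monom_of_set A = monom_of_set B \<longleftrightarrow> A = B"
  using keys_monom_of_set[OF assms(1)] keys_monom_of_set[OF assms(2)] by metis

lemma monom_of_set_keys:
  assumes "\<And>i. lookup M i \<le> 1"
  shows "monom_of_set (keys M) = M"
proof (rule poly_mapping_eqI)
  fix i
  show "lookup (monom_of_set (keys M)) i = lookup M i"
    using assms[of i] by (auto simp: lookup_monom_of_set in_keys_iff)
qed

lemma poly_mapping_last_difference:
  fixes a b :: "'a::linorder \<Rightarrow>\<^sub>0 'b::zero"
  assumes "a \<noteq> b"
  obtains i where "lookup a i \<noteq> lookup b i" "\<And>k. k > i \<Longrightarrow> lookup a k = lookup b k"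
proof -
  define D where "D = {i. lookup a i \<noteq> lookup b i}"
  have fin: "finite D"
    unfolding D_def by (rule finite_subset[of _ "keys a \<union> keys b"]) (auto simp: in_keys_iff)
  have "D \<noteq> {}"
  proof
    assume "D = {}"
    then have "a = b"
      by (intro poly_mapping_eqI) (auto simp: D_def)
    with assms show False ..
  qed
  then have "Max D \<in> D"
    using fin by simp
  moreover have "lookup a k = lookup b k" if "k > Max D" for k
    using Max_ge[OF fin, of k] that unfolding D_def by force
  ultimately show ?thesis
    using that unfolding D_def by blast
qed

lemma lookup_single_zero_mult: "lookup (Poly_Mapping.single 0 c * q) N = (c::'a::comm_ring_1) * lookup q N"
  by (simp flip: mult_map_scale_conv_mult add: map.rep_eq when_def)

section \<open>The reverse lexicographic order\<close>

lemma revlex_less_of_mdeg: "mdeg a < mdeg b \<Longrightarrow> revlex_less a b"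
  by (simp add: revlex_less_def)

lemma mdeg_le_of_revlex_less: "revlex_less a b \<Longrightarrow> mdeg a \<le> mdeg b"
  by (auto simp: revlex_less_def)

lemma revlex_less_same_mdeg:
  assumes "mdeg a = mdeg b"
  shows "revlex_less a b \<longleftrightarrow> (\<exists>i. lookup b i < lookup a i \<and> (\<forall>k>i. lookup a k = lookup b k))"
proof -
  let ?D = "{i. lookup a i \<noteq> lookup b i}"
  have fin: "finite ?D"
    by (rule finite_subset[of _ "keys a \<union> keys b"]) (auto simp: in_keys_iff)
  show ?thesis
  proof
    assume "revlex_less a b"
    then have "lookup b (Max ?D) < lookup a (Max ?D)"
      using assms by (auto simp: revlex_less_def Let_def)
    moreover have "lookup a k = lookup b k" if "k > Max ?D" for k
      using Max_ge[OF fin, of k] that by force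
    ultimately show "\<exists>i. lookup b i < lookup a i \<and> (\<forall>k>i. lookup a k = lookup b k)"
      by blast
  next
    assume "\<exists>i. lookup b i < lookup a i \<and> (\<forall>k>i. lookup a k = lookup b k)"
    then obtain i where i: "lookup b i < lookup a i" "\<And>k. k > i \<Longrightarrow> lookup a k = lookup b k"
      by blast
    have "y \<le> i" if "y \<in> ?D" for y
      using i(2)[of y] that by (cases "y \<le> i") auto
    then have "Max ?D = i"
      using i(1) by (intro Max_eqI[OF fin]) auto
    with i(1) assms show "revlex_less a b"
      by (auto simp: revlex_less_def Let_def)
  qed
qed

lemma revlex_lessI:
  assumes "mdeg a = mdeg b" "lookup b i < lookup a i" "\<And>k. k > i \<Longrightarrow> lookup a k = lookup b k"
  shows "revlex_less a b"
  using assms(2,3) by (auto simp: revlex_less_same_mdeg[OF assms(1)])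

lemma revlex_less_same_mdegE:
  assumes "revlex_less a b" "mdeg a = mdeg b"
  obtains i where "lookup b i < lookup a i" "\<And>k. k > i \<Longrightarrow> lookup a k = lookup b k"
  using assms(1) by (auto simp: revlex_less_same_mdeg[OF assms(2)])

lemma revlex_less_irrefl: "\<not> revlex_less a a"
  by (simp add: revlex_less_def)

lemma revlex_less_trans:
  assumes ab: "revlex_less a b" and bc: "revlex_less b c"
  shows "revlex_less a c"
proof (cases "mdeg a = mdeg b \<and> mdeg b = mdeg c")
  case False
  then have "mdeg a < mdeg c"
    using mdeg_le_of_revlex_less[OF ab] mdeg_le_of_revlex_less[OF bc] by linarith
  then show ?thesis by (rule revlex_less_of_mdeg)
next
  case True
  obtain i where i: "lookup b i < lookup a i" "\<And>k. k > i \<Longrightarrow> lookup a k = lookup b k"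
    using revlex_less_same_mdegE[OF ab] True by blast
  obtain j where j: "lookup c j < lookup b j" "\<And>k. k > j \<Longrightarrow> lookup b k = lookup c k"
    using revlex_less_same_mdegE[OF bc] True by blast
  have "lookup c (max i j) < lookup a (max i j)"
    using i j by (cases i j rule: linorder_cases) (auto simp: max_def)
  moreover have "lookup a k = lookup c k" if "k > max i j" for k
    using i(2) j(2) that by simp
  ultimately show ?thesis
    using True by (intro revlex_lessI) auto
qed

lemma revlex_less_asym: "revlex_less a b \<Longrightarrow> \<not> revlex_less b a"
  using revlex_less_trans[of a b a] revlex_less_irrefl[of a] by blast

lemma revlex_less_linear:
  assumes "a \<noteq> b"
  shows "revlex_less a b \<or> revlex_less b a"
proof (cases "mdeg a = mdeg b")
  case False
  then show ?thesis
    using revlex_less_of_mdeg[of a b] revlex_less_of_mdeg[of b a] by linarith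
next
  case True
  obtain i where "lookup a i \<noteq> lookup b i" and above: "\<And>k. k > i \<Longrightarrow> lookup a k = lookup b k"
    using poly_mapping_last_difference[OF assms] by blast
  then consider "lookup a i < lookup b i" | "lookup b i < lookup a i"
    by linarith
  then show ?thesis
  proof cases
    case 1
    then have "revlex_less b a"
      using True above by (intro revlex_lessI[of _ _ i]) auto
    then show ?thesis ..
  next
    case 2
    then have "revlex_less a b"
      using True above by (intro revlex_lessI[of _ _ i]) auto
    then show ?thesis ..
  qed
qed

lemma revlex_less_add_right:
  assumes "revlex_less a b"
  shows "revlex_less (a + c) (b + c)"
proof (cases "mdeg a = mdeg b")
  case True
  obtain i where "lookup b i < lookup a i" "\<And>k. k > i \<Longrightarrow> lookup a k = lookup b k"
    using revlex_less_same_mdegE[OF assms True] by blast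
  with True show ?thesis
    by (intro revlex_lessI[of _ _ i]) (simp_all add: mdeg_add lookup_add)
next
  case False
  then show ?thesis
    using mdeg_le_of_revlex_less[OF assms] by (simp add: revlex_less_of_mdeg mdeg_add)
qed

lemma revlex_greatest_exists:
  assumes "finite K" "K \<noteq> {}"
  obtains L where "L \<in> K" "\<And>M. M \<in> K \<Longrightarrow> M \<noteq> L \<Longrightarrow> revlex_less M L"
  using assms
proof (induction K arbitrary: thesis rule: finite_ne_induct)
  case (singleton x)
  then show ?case by blast
next
  case (insert x F)
  obtain L where L: "L \<in> F" "\<And>M. M \<in> F \<Longrightarrow> M \<noteq> L \<Longrightarrow> revlex_less M L"
    using insert.IH by blast
  show ?case
  proof (cases "revlex_less x L")
    case True
    with L show ?thesis
      by (intro insert.prems[of L]) auto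
  next
    case False
    have "x \<noteq> L"
      using insert.hyps L(1) by blast
    with False have "revlex_less L x"
      using revlex_less_linear by blast
    with L show ?thesis
      by (intro insert.prems[of x]) (auto intro: revlex_less_trans)
  qed
qed

lemma revlex_less_monom_of_set:
  assumes "finite A" "finite B" "card A = card B" "x \<in> A" "\<And>y. y \<in> B \<Longrightarrow> y < x"
  shows "revlex_less (monom_of_set A) (monom_of_set B)"
proof (rule revlex_lessI[of _ _ "Max A"])
  have "x \<le> Max A" "Max A \<in> A"
    using assms(1,4) by (auto intro: Max_ge Max_in)
  then have B_less: "y < Max A" if "y \<in> B" for y
    using assms(5) that by fastforce
  then show "lookup (monom_of_set B) (Max A) < lookup (monom_of_set A) (Max A)"
    using assms \<open>Max A \<in> A\<close> by (auto simp: lookup_monom_of_set)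
  show "lookup (monom_of_set A) k = lookup (monom_of_set B) k" if "Max A < k" for k
  proof -
    have "k \<notin> A"
      using Max_ge[OF assms(1), of k] that by (meson leD)
    moreover have "k \<notin> B"
      using B_less[of k] that by (meson less_asym)
    ultimately show ?thesis
      by (simp add: lookup_monom_of_set assms(1,2))
  qed
qed (simp add: assms mdeg_monom_of_set)

lemma Pn_single: "keys M \<subseteq> {..<n} \<Longrightarrow> Poly_Mapping.single M c \<in> Pn n"
  by (simp add: Pn_def)

lemma Pn_zero: "0 \<in> Pn n"
  by (simp add: Pn_def)

lemma Pn_one: "1 \<in> Pn n"
  using Pn_single[of 0 n 1] by simp

lemma Pn_add: "p \<in> Pn n \<Longrightarrow> q \<in> Pn n \<Longrightarrow> p + q \<in> Pn n"
  unfolding Pn_def using keys_add[of p q] by blast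

lemma Pn_mult: "p \<in> Pn n \<Longrightarrow> q \<in> Pn n \<Longrightarrow> p * q \<in> Pn n"
  unfolding Pn_def using keys_mult[of p q] by (force simp: keys_add_monom)

lemma gen_ideal_base: "g \<in> S \<Longrightarrow> g \<in> gen_ideal n S"
  unfolding gen_ideal_def
  by (intro CollectI exI[of _ "{g}"] exI[of _ "\<lambda>_. 1"]) (simp add: Pn_one)

lemma gen_ideal_add:
  assumes "p \<in> gen_ideal n S" "q \<in> gen_ideal n S"
  shows "p + q \<in> gen_ideal n S"
proof -
  obtain F c where F: "finite F" "F \<subseteq> S" "\<forall>f\<in>F. c f \<in> Pn n" "p = (\<Sum>f\<in>F. c f * f)"
    using assms(1) unfolding gen_ideal_def by blast
  obtain G d where G: "finite G" "G \<subseteq> S" "\<forall>f\<in>G. d f \<in> Pn n" "q = (\<Sum>f\<in>G. d f * f)"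
    using assms(2) unfolding gen_ideal_def by blast
  define e where "e f = (if f \<in> F then c f else 0) + (if f \<in> G then d f else 0)" for f
  have "p = (\<Sum>f\<in>F \<union> G. (if f \<in> F then c f else 0) * f)"
    unfolding F(4) using F(1) G(1) by (intro sum.mono_neutral_cong_left) auto
  moreover have "q = (\<Sum>f\<in>F \<union> G. (if f \<in> G then d f else 0) * f)"
    unfolding G(4) using F(1) G(1) by (intro sum.mono_neutral_cong_left) auto
  ultimately have "p + q = (\<Sum>f\<in>F \<union> G. e f * f)"
    by (simp add: e_def distrib_right sum.distrib)
  moreover have "\<forall>f\<in>F \<union> G. e f \<in> Pn n"
    using F G by (auto simp: e_def intro!: Pn_add Pn_zero)
  ultimately show ?thesis
    using F G unfolding gen_ideal_def by (intro CollectI exI[of _ "F \<union> G"] exI[of _ e]) auto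
qed

lemma gen_ideal_mult:
  assumes "h \<in> Pn n" "p \<in> gen_ideal n S"
  shows "h * p \<in> gen_ideal n S"
proof -
  obtain F c where F: "finite F" "F \<subseteq> S" "\<forall>f\<in>F. c f \<in> Pn n" "p = (\<Sum>f\<in>F. c f * f)"
    using assms(2) unfolding gen_ideal_def by blast
  then have "h * p = (\<Sum>f\<in>F. (h * c f) * f)"
    by (simp add: sum_distrib_left mult.assoc)
  with F assms(1) show ?thesis
    unfolding gen_ideal_def by (intro CollectI exI[of _ F] exI[of _ "\<lambda>f. h * c f"]) (auto intro: Pn_mult)
qed

lemma gen_ideal_zero: "0 \<in> gen_ideal n S"
  unfolding gen_ideal_def by (intro CollectI exI[of _ "{}"]) simp

lemma gen_ideal_sum: "(\<And>x. x \<in> A \<Longrightarrow> p x \<in> gen_ideal n S) \<Longrightarrow> (\<Sum>x\<in>A. p x) \<in> gen_ideal n S"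
  by (induction A rule: infinite_finite_induct) (simp_all add: gen_ideal_zero gen_ideal_add)

lemma gen_ideal_diff:
  fixes p q :: "'a::comm_ring_1 mpoly"
  assumes "p \<in> gen_ideal n S" "q \<in> gen_ideal n S"
  shows "p - q \<in> gen_ideal n S"
proof -
  have "Poly_Mapping.single 0 (-1) * q \<in> gen_ideal n S"
    using assms(2) by (intro gen_ideal_mult Pn_single) auto
  then have "- q \<in> gen_ideal n S"
    by (simp add: single_uminus)
  from gen_ideal_add[OF assms(1) this] show ?thesis
    by simp
qed

lemma lead_mon_eqI:
  assumes "L \<in> keys p" "\<And>M. M \<in> keys p \<Longrightarrow> M \<noteq> L \<Longrightarrow> revlex_less M L"
  shows "lead_mon p = L"
  unfolding lead_mon_def
proof (rule the_equality)
  fix L' assume L': "L' \<in> keys p \<and> (\<forall>M\<in>keys p. M \<noteq> L' \<longrightarrow> revlex_less M L')"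
  show "L' = L"
  proof (rule ccontr)
    assume "L' \<noteq> L"
    then have "revlex_less L' L" "revlex_less L L'"
      using assms L' by auto
    then show False
      using revlex_less_asym by blast
  qed
qed (use assms in blast)

lemma lead_mon_greatest:
  assumes "p \<noteq> 0"
  shows "lead_mon p \<in> keys p" "\<And>M. M \<in> keys p \<Longrightarrow> M \<noteq> lead_mon p \<Longrightarrow> revlex_less M (lead_mon p)"
proof -
  obtain L where L: "L \<in> keys p" "\<And>M. M \<in> keys p \<Longrightarrow> M \<noteq> L \<Longrightarrow> revlex_less M L"
    using revlex_greatest_exists[of "keys p"] assms by auto
  with lead_mon_eqI[OF L] show "lead_mon p \<in> keys p"
    "\<And>M. M \<in> keys p \<Longrightarrow> M \<noteq> lead_mon p \<Longrightarrow> revlex_less M (lead_mon p)"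
    by simp_all
qed

lemma lead_mon_mon: "lead_mon (mon M :: 'a::comm_ring_1 mpoly) = M"
  by (rule lead_mon_eqI) (simp_all add: mon_def)

lemma lead_mon_in_initial_ideal:
  "p \<in> I \<Longrightarrow> p \<noteq> 0 \<Longrightarrow> mon (lead_mon p) \<in> initial_ideal n I"
  unfolding initial_ideal_def by (rule gen_ideal_base) blast

lemma initial_ideal_mult_mon:
  assumes "mon A \<in> initial_ideal n I" "keys B \<subseteq> {..<n}"
  shows "mon (B + A) \<in> initial_ideal n I"
proof -
  have "Poly_Mapping.single B 1 * mon A \<in> initial_ideal n I"
    using assms unfolding initial_ideal_def by (intro gen_ideal_mult Pn_single)
  then show ?thesis
    by (simp add: mon_def mult_single)
qed

lemma sum_var_square:
  "((\<Sum>i<n. var i) ^ 2 :: 'a::comm_ring_1 mpoly) = (\<Sum>a<n. \<Sum>b<n. mon (var_monom a + var_monom b))"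
  by (simp add: power2_eq_square sum_product var_eq_mon mon_add)

lemma var_square_in_In: "i < n \<Longrightarrow> (var i ^ 2 :: 'a::comm_ring_1 mpoly) \<in> In n"
  unfolding In_def by (rule gen_ideal_base) blast

lemma sum_var_square_in_In: "((\<Sum>i<n. var i) ^ 2 :: 'a::comm_ring_1 mpoly) \<in> In n"
  unfolding In_def by (rule gen_ideal_base) blast

lemma mon_in_In_of_square:
  assumes "keys M \<subseteq> {..<n}" "lookup M i \<ge> 2"
  shows "(mon M :: 'a::comm_ring_1 mpoly) \<in> In n"
proof -
  obtain M' where M: "M = M' + (var_monom i + var_monom i)" "keys M' \<subseteq> keys M"
    using monom_split_square[OF assms(2)] .
  have "i < n"
    using assms by (metis in_keys_iff lessThan_iff not_numeral_le_zero subsetD)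
  then have "mon M' * var i ^ 2 \<in> (In n :: 'a mpoly set)"
    using M(2) assms(1) unfolding In_def mon_def
    by (intro gen_ideal_mult Pn_single var_square_in_In[unfolded In_def]) auto
  then show ?thesis
    by (simp add: M(1) var_eq_mon mon_add power2_eq_square)
qed

lemma mon_in_initial_In_of_square:
  assumes "keys M \<subseteq> {..<n}" "lookup M i \<ge> 2"
  shows "(mon M :: 'a::comm_ring_1 mpoly) \<in> initial_ideal n (In n)"
proof -
  have "mon M \<noteq> (0 :: 'a mpoly)"
    by (metis mon_def lookup_single_eq lookup_zero one_neq_zero)
  then show ?thesis
    using lead_mon_in_initial_ideal[OF mon_in_In_of_square[OF assms], of n] by (simp add: lead_mon_mon)
qed

lemma monom_of_set_keys_of_notin_initial_In:
  assumes "keys M \<subseteq> {..<n}" "(mon M :: 'a::comm_ring_1 mpoly) \<notin> initial_ideal n (In n)"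
  shows "M = monom_of_set (keys M)"
proof -
  have "lookup M i \<le> 1" for i
    using mon_in_initial_In_of_square[OF assms(1), of i] assms(2) by (cases "lookup M i \<ge> 2") auto
  then show ?thesis
    by (simp add: monom_of_set_keys)
qed

section \<open>Linear functionals annihilating \<open>I\<^sub>n\<close>\<close>

definition lin_ext :: "(monom \<Rightarrow> 'a::comm_ring_1) \<Rightarrow> 'a mpoly \<Rightarrow> 'a" where
  "lin_ext \<phi> q = (\<Sum>M\<in>keys q. lookup q M * \<phi> M)"

lemma lin_ext_eq_sum:
  assumes "finite K" "keys q \<subseteq> K"
  shows "lin_ext \<phi> q = (\<Sum>M\<in>K. lookup q M * \<phi> M)"
  unfolding lin_ext_def
  by (rule sum.mono_neutral_left[OF assms]) (simp add: not_in_keys_iff_lookup_eq_zero)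

lemma lin_ext_add: "lin_ext \<phi> (p + q) = lin_ext \<phi> p + lin_ext \<phi> q"
proof -
  let ?K = "keys p \<union> keys q"
  have "lin_ext \<phi> (p + q) = (\<Sum>M\<in>?K. lookup p M * \<phi> M) + (\<Sum>M\<in>?K. lookup q M * \<phi> M)"
    by (simp add: lin_ext_eq_sum[of ?K] keys_add lookup_add distrib_right sum.distrib)
  also have "\<dots> = lin_ext \<phi> p + lin_ext \<phi> q"
    by (simp add: lin_ext_eq_sum[of ?K])
  finally show ?thesis .
qed

lemma lin_ext_zero [simp]: "lin_ext \<phi> 0 = 0"
  by (simp add: lin_ext_def)

lemma lin_ext_sum: "lin_ext \<phi> (\<Sum>x\<in>A. p x) = (\<Sum>x\<in>A. lin_ext \<phi> (p x))"
  by (induction A rule: infinite_finite_induct) (simp_all add: lin_ext_add)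

lemma lin_ext_single: "lin_ext \<phi> (Poly_Mapping.single M c) = c * \<phi> M"
  by (simp add: lin_ext_eq_sum[of "{M}"])

lemma poly_mapping_eq_sum_single: "p = (\<Sum>M\<in>keys p. Poly_Mapping.single M (lookup p M))"
proof (rule poly_mapping_eqI)
  fix k
  have "lookup (\<Sum>M\<in>keys p. Poly_Mapping.single M (lookup p M)) k
      = (\<Sum>M\<in>keys p. if M = k then lookup p M else 0)"
    by (simp add: lookup_sum lookup_single when_def)
  also have "\<dots> = lookup p k"
    by (simp add: in_keys_iff)
  finally show "lookup p k = lookup (\<Sum>M\<in>keys p. Poly_Mapping.single M (lookup p M)) k" ..
qed

lemma lin_ext_single_mult:
  "lin_ext \<phi> (Poly_Mapping.single a 1 * p) = (\<Sum>M\<in>keys p. lookup p M * \<phi> (a + M))"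
proof -
  have "Poly_Mapping.single a 1 * p = (\<Sum>M\<in>keys p. Poly_Mapping.single (a + M) (lookup p M))"
    by (subst poly_mapping_eq_sum_single[of p]) (simp add: sum_distrib_left mult_single)
  then show ?thesis
    by (simp add: lin_ext_sum lin_ext_single)
qed

lemma lin_ext_mult_eq_0:
  assumes "\<And>M c. lin_ext \<phi> (Poly_Mapping.single M c * g) = 0"
  shows "lin_ext \<phi> (h * g) = 0"
proof -
  have "h * g = (\<Sum>M\<in>keys h. Poly_Mapping.single M (lookup h M) * g)"
    by (subst poly_mapping_eq_sum_single[of h]) (simp add: sum_distrib_right)
  then show ?thesis
    by (simp add: lin_ext_sum assms)
qed

lemma lin_ext_gen_ideal_eq_0:
  assumes "\<And>g M c. g \<in> S \<Longrightarrow> lin_ext \<phi> (Poly_Mapping.single M c * g) = 0"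
    and "p \<in> gen_ideal n S"
  shows "lin_ext \<phi> (h * p) = 0"
proof -
  obtain F c where F: "F \<subseteq> S" "p = (\<Sum>f\<in>F. c f * f)"
    using assms(2) unfolding gen_ideal_def by blast
  then have "h * p = (\<Sum>f\<in>F. (h * c f) * f)"
    by (simp add: sum_distrib_left mult.assoc)
  moreover have "lin_ext \<phi> ((h * c f) * f) = 0" if "f \<in> F" for f
  proof (rule lin_ext_mult_eq_0)
    show "lin_ext \<phi> (Poly_Mapping.single M d * f) = 0" for M d
      using F(1) that by (intro assms(1)) blast
  qed
  ultimately show ?thesis
    by (simp add: lin_ext_sum)
qed

lemma lin_ext_In_eq_0:
  fixes \<phi> :: "monom \<Rightarrow> 'a::comm_ring_1"
  assumes squares: "\<And>M i. i < n \<Longrightarrow> \<phi> (M + var_monom i + var_monom i) = 0"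
    and sum_square: "\<And>M. (\<Sum>a<n. \<Sum>b<n. \<phi> (M + var_monom a + var_monom b)) = 0"
    and "p \<in> In n"
  shows "lin_ext \<phi> (h * p) = 0"
  using assms(3) unfolding In_def
proof (rule lin_ext_gen_ideal_eq_0[rotated])
  fix g :: "'a mpoly" and M c
  assume "g \<in> insert ((\<Sum>i<n. var i) ^ 2) {var i ^ 2 |i. i < n}"
  then consider "g = (\<Sum>i<n. var i) ^ 2" | i where "i < n" "g = var i ^ 2"
    by blast
  then show "lin_ext \<phi> (Poly_Mapping.single M c * g) = 0"
  proof cases
    case 1
    have "Poly_Mapping.single M c * g
        = (\<Sum>a<n. \<Sum>b<n. Poly_Mapping.single (M + var_monom a + var_monom b) c)"
      by (simp add: 1 sum_var_square sum_distrib_left mon_def mult_single add.assoc)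
    then show ?thesis
      using sum_square[of M] by (simp add: lin_ext_sum lin_ext_single flip: sum_distrib_left)
  next
    case 2
    then have "Poly_Mapping.single M c * g = Poly_Mapping.single (M + var_monom i + var_monom i) c"
      by (simp add: var_eq_mon power2_eq_square mon_def mult_single add.assoc)
    then show ?thesis
      using squares[OF 2(1)] by (simp add: lin_ext_single)
  qed
qed

lemma mon_notin_initial_ideal:
  fixes \<phi> :: "monom \<Rightarrow> 'a::idom"
  assumes annihilates: "\<And>h p. p \<in> I \<Longrightarrow> lin_ext \<phi> (h * p) = 0"
    and nonzero: "\<phi> \<nu> \<noteq> 0"
    and below: "\<And>M. revlex_less M \<nu> \<Longrightarrow> \<phi> M = 0"
  shows "(mon \<nu> :: 'a mpoly) \<notin> initial_ideal n I"
proof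
  assume "(mon \<nu> :: 'a mpoly) \<in> initial_ideal n I"
  then obtain F c where F: "F \<subseteq> {mon (lead_mon p) | p. p \<in> I \<and> p \<noteq> 0}"
      "(mon \<nu> :: 'a mpoly) = (\<Sum>f\<in>F. c f * f)"
    unfolding initial_ideal_def gen_ideal_def by blast
  have "(\<Sum>f\<in>F. lookup (c f * f) \<nu>) = 1"
    using arg_cong[OF F(2), of "\<lambda>q. lookup q \<nu>"] by (simp add: lookup_sum lookup_mon)
  then obtain f where "f \<in> F" "lookup (c f * f) \<nu> \<noteq> 0"
    by (metis (mono_tags, lifting) one_neq_zero sum.neutral)
  with F(1) obtain p where p: "p \<in> I" "p \<noteq> 0" and "\<nu> \<in> keys (c f * mon (lead_mon p))"
    by (auto simp: in_keys_iff)
  then obtain a where \<nu>: "\<nu> = a + lead_mon p"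
    using keys_mult[of "c f" "mon (lead_mon p)"] by (auto simp: mon_def)
  have "(\<Sum>M\<in>keys p. lookup p M * \<phi> (a + M)) = 0"
    using annihilates[OF p(1), of "Poly_Mapping.single a 1"] by (simp add: lin_ext_single_mult)
  moreover have "lookup p M * \<phi> (a + M) = 0" if "M \<in> keys p - {lead_mon p}" for M
  proof -
    have "revlex_less (M + a) (lead_mon p + a)"
      using that lead_mon_greatest[OF p(2)] by (intro revlex_less_add_right) auto
    then show ?thesis
      using below \<nu> by (simp add: add.commute)
  qed
  ultimately have "lookup p (lead_mon p) * \<phi> \<nu> = 0"
    using lead_mon_greatest(1)[OF p(2)] \<nu> by (simp add: sum.remove)
  moreover have "lookup p (lead_mon p) \<noteq> 0"
    using lead_mon_greatest(1)[OF p(2)] by (simp add: in_keys_iff)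
  ultimately show False
    using nonzero by simp
qed

section \<open>Squarefree monomials outside the initial ideal\<close>

lemma minus_one_power_card_toggle:
  assumes "finite A"
  shows "(-1::'a::ring_1) ^ card (if b \<in> A then A - {b} else insert b A) = - ((-1) ^ card A)"
proof (cases "b \<in> A")
  case True
  then obtain k where "card A = Suc k"
    using assms by (metis card_gt_0_iff emptyE gr0_implies_Suc)
  with True show ?thesis
    by (simp add: card_Diff_singleton)
next
  case False
  with assms show ?thesis
    by simp
qed

locale ballot_pairing =
  fixes n c :: nat and B :: "nat set" and \<beta> :: "nat \<Rightarrow> nat"
  assumes finite_B: "finite B"
    and inj_\<beta>: "inj_on \<beta> B"
    and \<beta>_less: "\<And>b. b \<in> B \<Longrightarrow> \<beta> b < b"
    and c_notin_B: "c \<notin> B"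
    and \<beta>_notin: "\<And>b. b \<in> B \<Longrightarrow> \<beta> b \<notin> insert c B"
    and c_less: "c < n"
    and B_less: "\<And>b. b \<in> B \<Longrightarrow> b < n"
begin

definition paired :: "nat set" where
  "paired = B \<union> \<beta> ` B"

definition partner :: "nat \<Rightarrow> nat" where
  "partner x = (if x \<in> B then \<beta> x else the_inv_into B \<beta> x)"

definition transversal :: "monom \<Rightarrow> bool" where
  "transversal N \<longleftrightarrow> (\<forall>i. lookup N i \<le> 1) \<and> keys N \<subseteq> insert c paired \<and> lookup N c = 1
     \<and> (\<forall>b\<in>B. lookup N b + lookup N (\<beta> b) = 1)"

definition flips :: "monom \<Rightarrow> nat set" where
  "flips N = {b \<in> B. lookup N b = 0}"

definition sign_fun :: "monom \<Rightarrow> 'a::ring_1" where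
  "sign_fun N = (if transversal N then (-1) ^ card (flips N) else 0)"

lemma paired_cases:
  assumes "x \<in> paired"
  obtains b where "b \<in> B" "x = b" "partner x = \<beta> b"
    | b where "b \<in> B" "x = \<beta> b" "partner x = b"
  using assms \<beta>_notin inj_\<beta> unfolding paired_def partner_def
  by (auto simp: the_inv_into_f_f)

lemma partner_in_paired: "x \<in> paired \<Longrightarrow> partner x \<in> paired"
  by (cases rule: paired_cases) (auto simp: paired_def)

lemma partner_partner: "x \<in> paired \<Longrightarrow> partner (partner x) = x"
  by (cases rule: paired_cases)
    (use \<beta>_notin inj_\<beta> in \<open>auto simp: partner_def the_inv_into_f_f\<close>)

lemma paired_less: "x \<in> paired \<Longrightarrow> x < n"
  using B_less \<beta>_less unfolding paired_def by (auto intro: less_trans)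

lemma transversal_pair_lookup:
  assumes b: "b \<in> B" and xy: "{x, y} = {b, \<beta> b}" and N: "transversal (K + var_monom x)"
  shows "x \<noteq> y" "lookup K x = 0" "lookup K y = 0"
proof -
  show "x \<noteq> y"
    using xy \<beta>_less[OF b] by (metis doubleton_eq_iff less_irrefl)
  have "lookup (K + var_monom x) x \<le> 1" "lookup (K + var_monom x) x + lookup (K + var_monom x) y = 1"
    using N b xy unfolding transversal_def by (auto simp: doubleton_eq_iff)
  with \<open>x \<noteq> y\<close> show "lookup K x = 0" "lookup K y = 0"
    by (simp_all add: lookup_add lookup_var_monom)
qed

lemma pairs_disjoint:
  assumes "b \<in> B" "b' \<in> B" "b' \<noteq> b" "{x, y} = {b, \<beta> b}"
  shows "b' \<notin> {x, y}" "\<beta> b' \<notin> {x, y}"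
  using assms \<beta>_notin inj_\<beta> by (auto simp: doubleton_eq_iff inj_on_eq_iff)

lemma transversal_swap:
  assumes b: "b \<in> B" and xy: "{x, y} = {b, \<beta> b}" and N: "transversal (K + var_monom x)"
  shows "transversal (K + var_monom y)"
  unfolding transversal_def
proof (intro conjI ballI allI)
  let ?N = "K + var_monom x" and ?N' = "K + var_monom y"
  have lookup_N: "lookup ?N i = lookup K i + (if i = x then 1 else 0)"
    and lookup_N': "lookup ?N' i = lookup K i + (if i = y then 1 else 0)" for i
    by (simp_all add: lookup_add lookup_var_monom)
  note K = transversal_pair_lookup[OF b xy N]
  show "lookup ?N' i \<le> 1" for i
  proof -
    have "lookup ?N i \<le> 1"
      using N unfolding transversal_def by blast
    then show ?thesis
      using K by (auto simp: lookup_N lookup_N' split: if_splits)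
  qed
  have "y \<in> paired"
    using b xy unfolding paired_def by (auto simp: doubleton_eq_iff)
  then show "keys ?N' \<subseteq> insert c paired"
    using N unfolding transversal_def by (auto simp: keys_add_monom)
  have "c \<notin> {x, y}"
    using b xy c_notin_B \<beta>_notin[OF b] by (auto simp: doubleton_eq_iff)
  then show "lookup ?N' c = 1"
    using N unfolding transversal_def by (simp add: lookup_N lookup_N')
  show "lookup ?N' b' + lookup ?N' (\<beta> b') = 1" if "b' \<in> B" for b'
  proof (cases "b' = b")
    case True
    with xy K show ?thesis
      by (auto simp: doubleton_eq_iff lookup_N')
  next
    case False
    have "lookup ?N b' + lookup ?N (\<beta> b') = 1"
      using N that unfolding transversal_def by blast
    then show ?thesis
      using pairs_disjoint[OF b that False xy] by (simp add: lookup_N lookup_N')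
  qed
qed

lemma flips_swap:
  assumes b: "b \<in> B" and xy: "{x, y} = {b, \<beta> b}" and N: "transversal (K + var_monom x)"
  shows "flips (K + var_monom y)
    = (if b \<in> flips (K + var_monom x) then flips (K + var_monom x) - {b} else insert b (flips (K + var_monom x)))"
proof -
  let ?N = "K + var_monom x" and ?N' = "K + var_monom y"
  have lookup_N: "lookup ?N i = lookup K i + (if i = x then 1 else 0)"
    and lookup_N': "lookup ?N' i = lookup K i + (if i = y then 1 else 0)" for i
    by (simp_all add: lookup_add lookup_var_monom)
  have "b' \<in> flips ?N' \<longleftrightarrow> b' \<in> flips ?N" if "b' \<noteq> b" for b'
    using pairs_disjoint[OF b _ that xy] by (auto simp: flips_def lookup_N lookup_N')
  moreover have "b \<in> flips ?N' \<longleftrightarrow> b \<notin> flips ?N"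
    using b xy transversal_pair_lookup[OF b xy N] by (auto simp: flips_def doubleton_eq_iff lookup_N lookup_N')
  ultimately show ?thesis
    by (intro set_eqI) (metis DiffE DiffI insertCI insertE singletonD)
qed

lemma sign_fun_swap:
  assumes b: "b \<in> B" and xy: "{x, y} = {b, \<beta> b}"
  shows "sign_fun (K + var_monom y) = - (sign_fun (K + var_monom x) :: 'a::ring_1)"
proof (cases "transversal (K + var_monom x)")
  case True
  then show ?thesis
    using transversal_swap[OF b xy True] flips_swap[OF b xy True]
      minus_one_power_card_toggle[of "flips (K + var_monom x)" b]
    by (simp add: sign_fun_def flips_def finite_B)
next
  case False
  moreover have "{y, x} = {b, \<beta> b}"
    using xy by (simp add: insert_commute)
  ultimately have "\<not> transversal (K + var_monom y)"
    using transversal_swap[OF b] by blast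
  with False show ?thesis
    by (simp add: sign_fun_def)
qed

lemma sign_fun_partner:
  assumes "x \<in> paired"
  shows "sign_fun (K + var_monom (partner x)) = - (sign_fun (K + var_monom x) :: 'a::ring_1)"
proof -
  obtain b where "b \<in> B" "{x, partner x} = {b, \<beta> b}"
    using assms by (cases rule: paired_cases) (auto simp: insert_commute)
  then show ?thesis
    by (rule sign_fun_swap)
qed

lemma sign_fun_square: "sign_fun (M + var_monom i + var_monom i) = 0"
proof -
  have "lookup (M + var_monom i + var_monom i) i \<ge> 2"
    by (simp add: lookup_add lookup_var_monom)
  then have "\<not> transversal (M + var_monom i + var_monom i)"
    unfolding transversal_def by (auto simp: not_le intro: exI[of _ i])
  then show ?thesis
    by (simp add: sign_fun_def)
qed

lemma transversal_pair_in_paired: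
  assumes "transversal (M + var_monom a + var_monom b)"
  shows "a \<in> paired \<or> b \<in> paired"
proof -
  let ?N = "M + var_monom a + var_monom b"
  have "a \<in> keys ?N" "b \<in> keys ?N"
    by (simp_all add: keys_add_monom)
  then have "a \<in> insert c paired" "b \<in> insert c paired"
    using assms unfolding transversal_def by blast+
  moreover have "\<not> (a = c \<and> b = c)"
  proof
    assume "a = c \<and> b = c"
    then have "lookup ?N c \<ge> 2"
      by (simp add: lookup_add lookup_var_monom)
    with assms show False
      unfolding transversal_def by simp
  qed
  ultimately show ?thesis
    by blast
qed

fun pair_swap :: "nat \<times> nat \<Rightarrow> nat \<times> nat" where
  "pair_swap (a, b) =
    (if a \<in> paired then (partner a, b) else if b \<in> paired then (a, partner b) else (a, b))"

lemma pair_swap_pair_swap: "pair_swap (pair_swap p) = p"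
  by (cases p) (auto simp: partner_in_paired partner_partner)

lemma pair_swap_lessThan: "p \<in> {..<n} \<times> {..<n} \<Longrightarrow> pair_swap p \<in> {..<n} \<times> {..<n}"
  by (cases p) (auto simp: paired_less partner_in_paired)

lemma sign_fun_pair_swap:
  "sign_fun (M + var_monom (fst (pair_swap p)) + var_monom (snd (pair_swap p)))
    = - (sign_fun (M + var_monom (fst p) + var_monom (snd p)) :: 'a::ring_1)"
proof (cases p)
  case (Pair a b)
  consider "a \<in> paired" | "a \<notin> paired" "b \<in> paired" | "a \<notin> paired" "b \<notin> paired"
    by blast
  then show ?thesis
  proof cases
    case 1
    then show ?thesis
      using sign_fun_partner[of a "M + var_monom b"] Pair by (simp add: ac_simps)
  next
    case 2
    then show ?thesis
      using sign_fun_partner[of b "M + var_monom a"] Pair by simp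
  next
    case 3
    then have "\<not> transversal (M + var_monom a + var_monom b)"
      using transversal_pair_in_paired by blast
    with 3 Pair show ?thesis
      by (simp add: sign_fun_def)
  qed
qed

lemma sum_sign_fun_eq_0:
  "(\<Sum>a<n. \<Sum>b<n. sign_fun (M + var_monom a + var_monom b) :: 'a::{idom,ring_char_0}) = 0"
proof -
  define g :: "nat \<times> nat \<Rightarrow> 'a" where "g p = sign_fun (M + var_monom (fst p) + var_monom (snd p))" for p
  let ?S = "{..<n} \<times> {..<n}"
  have "sum g ?S = sum (g \<circ> pair_swap) ?S"
    by (rule sum.reindex_bij_witness[where i = pair_swap and j = pair_swap])
      (simp_all add: pair_swap_pair_swap pair_swap_lessThan)
  also have "\<dots> = - sum g ?S"
    by (simp add: g_def sign_fun_pair_swap sum_negf)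
  finally have "2 * sum g ?S = 0"
    by (metis mult_2 eq_neg_iff_add_eq_0)
  then have "sum g ?S = 0"
    by simp
  then show ?thesis
    by (simp add: g_def sum.cartesian_product case_prod_beta')
qed

abbreviation \<nu> :: monom where
  "\<nu> \<equiv> monom_of_set (insert c B)"

lemma lookup_\<nu>: "lookup \<nu> i = (if i = c \<or> i \<in> B then 1 else 0)"
  by (simp add: lookup_monom_of_set finite_B)

lemma transversal_\<nu>: "transversal \<nu>"
  using \<beta>_notin unfolding transversal_def
  by (auto simp: lookup_\<nu> keys_monom_of_set finite_B paired_def)

lemma sign_fun_\<nu>: "sign_fun \<nu> = 1"
proof -
  have "flips \<nu> = {}"
    by (auto simp: flips_def lookup_\<nu>)
  with transversal_\<nu> show ?thesis
    by (simp add: sign_fun_def)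
qed

lemma mdeg_transversal:
  assumes "transversal N"
  shows "mdeg N = card B + 1"
proof -
  have disjoint: "c \<notin> B \<union> \<beta> ` B" "B \<inter> \<beta> ` B = {}"
    using c_notin_B \<beta>_notin by auto
  have "mdeg N = (\<Sum>i\<in>insert c paired. lookup N i)"
    using assms unfolding transversal_def paired_def by (intro mdeg_eq_sum) (simp_all add: finite_B)
  also have "\<dots> = lookup N c + (\<Sum>i\<in>B. lookup N i) + (\<Sum>i\<in>\<beta> ` B. lookup N i)"
    using disjoint finite_B by (simp add: paired_def sum.union_disjoint)
  also have "(\<Sum>i\<in>\<beta> ` B. lookup N i) = (\<Sum>b\<in>B. lookup N (\<beta> b))"
    by (rule sum.reindex[OF inj_\<beta>, unfolded comp_def])
  also have "lookup N c + (\<Sum>i\<in>B. lookup N i) + (\<Sum>b\<in>B. lookup N (\<beta> b)) = 1 + card B"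
    using assms unfolding transversal_def by (simp add: add.assoc flip: sum.distrib)
  finally show ?thesis
    by simp
qed

text \<open>Each transversal replaces some elements \<open>b\<close> of \<open>B\<close> by the smaller \<open>\<beta> b\<close>, so it is
  at least \<open>\<nu>\<close> in the reverse lexicographic order.\<close>
lemma transversal_not_below_\<nu>:
  assumes N: "transversal N"
  shows "\<not> revlex_less N \<nu>"
proof
  assume "revlex_less N \<nu>"
  moreover have "mdeg N = mdeg \<nu>"
    using mdeg_transversal[OF N] mdeg_transversal[OF transversal_\<nu>] by simp
  ultimately obtain i where i: "lookup \<nu> i < lookup N i" and above: "\<And>k. k > i \<Longrightarrow> lookup N k = lookup \<nu> k"
    using revlex_less_same_mdegE by blast
  have "lookup N i \<le> 1"
    using N unfolding transversal_def by blast
  with i have "lookup \<nu> i = 0" "lookup N i = 1"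
    by linarith+
  then have "i \<in> keys N" "i \<noteq> c" "i \<notin> B"
    by (auto simp: in_keys_iff lookup_\<nu> split: if_splits)
  then obtain b where b: "b \<in> B" "i = \<beta> b"
    using N unfolding transversal_def paired_def by blast
  have "lookup N b + lookup N i = 1"
    using N b unfolding transversal_def by auto
  with \<open>lookup N i = 1\<close> have "lookup N b = 0"
    by linarith
  moreover have "lookup N b = lookup \<nu> b"
    using above \<beta>_less[OF b(1)] b(2) by blast
  ultimately show False
    using b(1) by (simp add: lookup_\<nu>)
qed

lemma sign_fun_below_\<nu>: "revlex_less M \<nu> \<Longrightarrow> sign_fun M = 0"
  using transversal_not_below_\<nu> by (auto simp: sign_fun_def)

theorem mon_\<nu>_notin_initial_In: "(mon \<nu> :: 'a::{idom,ring_char_0} mpoly) \<notin> initial_ideal n (In n)"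
proof (rule mon_notin_initial_ideal[where \<phi> = sign_fun])
  show "lin_ext sign_fun (h * p) = (0::'a)" if "p \<in> In n" for h p
    using that by (rule lin_ext_In_eq_0[OF sign_fun_square sum_sign_fun_eq_0])
qed (simp_all add: sign_fun_\<nu> sign_fun_below_\<nu>)

end

section \<open>Squarefree monomials in the initial ideal\<close>

lemma sum_of_bool_mem:
  assumes "finite X"
  shows "(\<Sum>b\<in>X. f (of_bool (b \<in> R))) = of_nat (card (X \<inter> R)) * f 1 + of_nat (card (X - R)) * (f 0 :: 'a::comm_ring_1)"
proof -
  have "(\<Sum>b\<in>X. f (of_bool (b \<in> R))) = (\<Sum>b\<in>X \<inter> R. f (of_bool (b \<in> R))) + (\<Sum>b\<in>X - R. f (of_bool (b \<in> R)))"
    using assms by (metis Int_Diff_Un Int_Diff_disjoint finite_Diff finite_Int sum.union_disjoint)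
  then show ?thesis
    by simp
qed

lemma sum_ordered_pairs_of_bool_mem:
  fixes F :: "nat \<Rightarrow> 'a::comm_ring_1" and X R :: "'b set"
  assumes "finite X"
  defines "s \<equiv> of_nat (card (X \<inter> R))" and "t \<equiv> of_nat (card (X - R))"
  shows "(\<Sum>a\<in>X. \<Sum>b\<in>X - {a}. F (of_bool (a \<in> R) + of_bool (b \<in> R)))
    = s * (s - 1) * F 2 + 2 * s * t * F 1 + t * (t - 1) * F 0"
proof -
  have inner: "(\<Sum>b\<in>X. F (of_bool (a \<in> R) + of_bool (b \<in> R)))
      = s * F (of_bool (a \<in> R) + 1) + t * F (of_bool (a \<in> R))" for a
    using sum_of_bool_mem[OF assms(1), of "\<lambda>x. F (of_bool (a \<in> R) + x)" R]
    by (simp add: s_def t_def add.commute)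
  have "(\<Sum>a\<in>X. \<Sum>b\<in>X - {a}. F (of_bool (a \<in> R) + of_bool (b \<in> R)))
      = (\<Sum>a\<in>X. (\<Sum>b\<in>X. F (of_bool (a \<in> R) + of_bool (b \<in> R))) - F (2 * of_bool (a \<in> R)))"
    using assms(1) by (intro sum.cong refl) (simp add: sum_diff1 mult_2)
  also have "\<dots> = (\<Sum>a\<in>X. s * F (of_bool (a \<in> R) + 1) + t * F (of_bool (a \<in> R)))
      - (\<Sum>a\<in>X. F (2 * of_bool (a \<in> R)))"
    by (simp add: sum_subtractf inner)
  also have "\<dots> = s * (s * F 2 + t * F 1) + t * (s * F 1 + t * F 0) - (s * F 2 + t * F 0)"
    using sum_of_bool_mem[OF assms(1), of "\<lambda>x. s * F (x + 1) + t * F x" R]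
      sum_of_bool_mem[OF assms(1), of "\<lambda>x. F (2 * x)" R]
    by (simp add: s_def t_def numeral_2_eq_2)
  also have "\<dots> = s * (s - 1) * F 2 + 2 * s * t * F 1 + t * (t - 1) * F 0"
    by (simp add: algebra_simps)
  finally show ?thesis .
qed

lemma card_Diff_pair:
  assumes "finite X" "a \<noteq> b"
  shows "card (X - {a, b}) = card X - of_bool (a \<in> X) - of_bool (b \<in> X)"
proof -
  have "X - {a, b} = (X - {a}) - {b}"
    by auto
  moreover have "b \<in> X - {a} \<longleftrightarrow> b \<in> X"
    using assms(2) by auto
  ultimately show ?thesis
    using assms(1) by (simp add: card_Diff_singleton_if)
qed

text \<open>With \<open>w k = witness_coeff m k\<close>, the coefficient of a squarefree \<open>x\<^sup>Q\<close> with
  \<open>|Q| = m\<close> and \<open>|Q \<inter> R| = s\<close> in \<open>\<Sum>\<^sub>P w |P \<inter> R| \<cdot> sqfree_part n P\<close>, over the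
  \<open>(m - 2)\<close>-subsets \<open>P\<close> of the first \<open>j\<close> variables, counts the ordered pairs \<open>(a, b)\<close> with
  \<open>P = Q - {a, b}\<close>: it is
  \<open>s(s - 1) w (s - 2) + 2s(m - s) w (s - 1) + (m - s)(m - s - 1) w s\<close>.
  The recursion makes this \<open>[s = m]\<close>; it divides by \<open>(k + 2)(k + 1)\<close>, whence characteristic zero.\<close>
function witness_coeff :: "nat \<Rightarrow> nat \<Rightarrow> 'a::field" where
  "witness_coeff m k = (if m < k + 2 then 0 else
     (of_bool (k + 2 = m) - 2 * of_nat (k + 2) * of_nat (m - k - 2) * witness_coeff m (k + 1)
       - of_nat (m - k - 2) * (of_nat (m - k - 2) - 1) * witness_coeff m (k + 2))
     / (of_nat (k + 2) * of_nat (k + 1)))"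
  by pat_completeness auto
termination
  by (relation "measure (\<lambda>(m, k). m - k)") auto

declare witness_coeff.simps [simp del]

lemma witness_coeff_rec:
  assumes "k + 2 \<le> m"
  shows "of_nat (k + 2) * of_nat (k + 1) * witness_coeff m k
      + 2 * of_nat (k + 2) * of_nat (m - k - 2) * witness_coeff m (k + 1)
      + of_nat (m - k - 2) * (of_nat (m - k - 2) - 1) * witness_coeff m (k + 2)
    = (of_bool (k + 2 = m) :: 'a::field_char_0)"
proof -
  have "(of_nat (k + 2) * of_nat (k + 1) :: 'a) \<noteq> 0"
    by (simp only: mult_eq_0_iff of_nat_eq_0_iff) simp
  moreover have "witness_coeff m k = (of_bool (k + 2 = m)
      - 2 * of_nat (k + 2) * of_nat (m - k - 2) * witness_coeff m (k + 1)
      - of_nat (m - k - 2) * (of_nat (m - k - 2) - 1) * witness_coeff m (k + 2))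
      / (of_nat (k + 2) * (of_nat (k + 1) :: 'a))"
    using assms by (subst witness_coeff.simps) simp
  ultimately show ?thesis
    by (simp add: field_simps)
qed

definition sqfree_part :: "nat \<Rightarrow> nat set \<Rightarrow> 'a::comm_ring_1 mpoly" where
  "sqfree_part n P = (\<Sum>a<n. \<Sum>b<n.
     if a \<noteq> b \<and> a \<notin> P \<and> b \<notin> P then mon (monom_of_set P + var_monom a + var_monom b) else 0)"

lemma sqfree_part_in_In:
  assumes "finite P" "P \<subseteq> {..<n}"
  shows "(sqfree_part n P :: 'a::comm_ring_1 mpoly) \<in> In n"
proof -
  let ?N = "\<lambda>a b. monom_of_set P + var_monom a + var_monom b"
  let ?fresh = "\<lambda>a b. a \<noteq> b \<and> a \<notin> P \<and> b \<notin> P"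
  let ?rest = "\<Sum>a<n. \<Sum>b<n. if ?fresh a b then 0 else (mon (?N a b) :: 'a mpoly)"
  have "mon (monom_of_set P) * (\<Sum>i<n. var i) ^ 2 \<in> (In n :: 'a mpoly set)"
    using assms unfolding In_def mon_def
    by (intro gen_ideal_mult Pn_single sum_var_square_in_In[unfolded In_def]) (simp add: keys_monom_of_set)
  moreover have "?rest \<in> In n"
    unfolding In_def
  proof (intro gen_ideal_sum)
    fix a b assume "a \<in> {..<n}" "b \<in> {..<n}"
    have lookup_N: "lookup (?N a b) i = of_bool (i \<in> P) + of_bool (i = a) + of_bool (i = b)" for i
      by (simp add: lookup_add lookup_var_monom lookup_monom_of_set assms(1))
    have "\<not> ?fresh a b \<Longrightarrow> lookup (?N a b) a \<ge> 2 \<or> lookup (?N a b) b \<ge> 2"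
      by (auto simp: lookup_N)
    moreover have "keys (?N a b) \<subseteq> {..<n}"
      using assms \<open>a \<in> {..<n}\<close> \<open>b \<in> {..<n}\<close> by (auto simp: keys_add_monom keys_monom_of_set)
    ultimately show "(if ?fresh a b then 0 else mon (?N a b)) \<in> gen_ideal n (insert ((\<Sum>i<n. var i) ^ 2) {var i ^ 2 |i. i < n})"
      using mon_in_In_of_square[of "?N a b" n] by (auto simp: In_def gen_ideal_zero)
  qed
  ultimately have "mon (monom_of_set P) * (\<Sum>i<n. var i) ^ 2 - ?rest \<in> (In n :: 'a mpoly set)"
    unfolding In_def by (rule gen_ideal_diff)
  moreover have "mon (monom_of_set P) * (\<Sum>i<n. var i) ^ 2 = (\<Sum>a<n. \<Sum>b<n. (mon (?N a b) :: 'a mpoly))"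
    by (simp add: sum_var_square sum_distrib_left add.assoc flip: mon_add)
  then have "mon (monom_of_set P) * (\<Sum>i<n. var i) ^ 2 - ?rest = sqfree_part n P"
    unfolding sqfree_part_def by (simp flip: sum_subtractf) (intro sum.cong refl, simp)
  ultimately show ?thesis
    by simp
qed

lemma monom_of_set_add_pair_eq_iff:
  assumes "finite P" "finite Q"
  shows "(a \<noteq> b \<and> a \<notin> P \<and> b \<notin> P \<and> monom_of_set P + var_monom a + var_monom b = monom_of_set Q)
    \<longleftrightarrow> (a \<in> Q \<and> b \<in> Q - {a} \<and> P = Q - {a, b})"
proof -
  have "monom_of_set P + var_monom a + var_monom b = monom_of_set (insert a (insert b P))"
    if "a \<noteq> b" "a \<notin> P" "b \<notin> P"
    using that assms(1) by (simp add: monom_of_set_insert ac_simps)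
  then show ?thesis
    using assms by (auto simp: monom_of_set_inject)
qed

lemma lookup_sqfree_part_monom_of_set:
  assumes "finite P" "finite Q" "Q \<subseteq> {..<n}"
  shows "lookup (sqfree_part n P :: 'a::comm_ring_1 mpoly) (monom_of_set Q)
    = (\<Sum>a\<in>Q. \<Sum>b\<in>Q - {a}. of_bool (P = Q - {a, b}))"
proof -
  have "lookup (sqfree_part n P :: 'a mpoly) (monom_of_set Q)
      = (\<Sum>a<n. \<Sum>b<n. of_bool (a \<in> Q \<and> b \<in> Q - {a} \<and> P = Q - {a, b}))"
    unfolding sqfree_part_def lookup_sum
    by (intro sum.cong refl)
      (subst monom_of_set_add_pair_eq_iff[OF assms(1,2), symmetric], simp add: lookup_mon)
  also have "\<dots> = (\<Sum>a\<in>Q. \<Sum>b\<in>Q - {a}. of_bool (P = Q - {a, b}))"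
    using assms(3) by (intro sum.mono_neutral_cong_right) auto
  finally show ?thesis .
qed

lemma keys_sqfree_part:
  assumes "N \<in> keys (sqfree_part n P :: 'a::comm_ring_1 mpoly)"
  obtains a b where "a < n" "b < n" "a \<noteq> b" "a \<notin> P" "b \<notin> P"
    "N = monom_of_set P + var_monom a + var_monom b"
proof -
  let ?f = "\<lambda>a b. if a \<noteq> b \<and> a \<notin> P \<and> b \<notin> P
    then mon (monom_of_set P + var_monom a + var_monom b) else (0 :: 'a mpoly)"
  obtain a where "a < n" "N \<in> keys (\<Sum>b<n. ?f a b)"
    using assms keys_sum[of "\<lambda>a. \<Sum>b<n. ?f a b" "{..<n}"] unfolding sqfree_part_def by blast
  moreover obtain b where "b < n" "N \<in> keys (?f a b)"
    using calculation(2) keys_sum[of "?f a" "{..<n}"] by blast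
  ultimately show ?thesis
    using that by (auto simp: mon_def split: if_splits)
qed

locale crowded_prefix =
  fixes n j m :: nat and R :: "nat set"
  assumes R_subset: "R \<subseteq> {..<j}"
    and j_le: "j \<le> n"
    and card_R: "card R = m"
    and two_le_m: "2 \<le> m"
    and crowded: "j + 2 \<le> 2 * m"
begin

lemma finite_R: "finite R"
  using R_subset by (rule finite_subset) simp

definition small_sets :: "nat set set" where
  "small_sets = {P. P \<subseteq> {..<j} \<and> card P = m - 2}"

definition witness :: "'a::field mpoly" where
  "witness = (\<Sum>P\<in>small_sets. Poly_Mapping.single 0 (witness_coeff m (card (P \<inter> R))) * sqfree_part n P)"

lemma finite_small_sets: "finite small_sets"
  unfolding small_sets_def by (rule finite_subset[of _ "Pow {..<j}"]) auto

lemma small_sets_finite: "P \<in> small_sets \<Longrightarrow> finite P"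
  unfolding small_sets_def by (auto intro: finite_subset[of _ "{..<j}"])

lemma witness_in_In: "(witness :: 'a::field mpoly) \<in> In n"
  unfolding witness_def In_def
proof (rule gen_ideal_sum, rule gen_ideal_mult)
  fix P assume P: "P \<in> small_sets"
  then have "P \<subseteq> {..<n}"
    using j_le unfolding small_sets_def by auto
  with small_sets_finite[OF P] show "sqfree_part n P \<in> gen_ideal n (insert ((\<Sum>i<n. var i) ^ 2) {var i ^ 2 |i. i < n})"
    by (rule sqfree_part_in_In[unfolded In_def])
qed (simp add: Pn_single)

lemma lookup_witness_monom_of_set_eq_sum:
  assumes "Q \<subseteq> {..<j}" "card Q = m"
  shows "lookup (witness :: 'a::field mpoly) (monom_of_set Q)
    = (\<Sum>a\<in>Q. \<Sum>b\<in>Q - {a}. witness_coeff m (card ((Q - {a, b}) \<inter> R)))"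
proof -
  define w :: "nat set \<Rightarrow> 'a" where "w P = witness_coeff m (card (P \<inter> R))" for P
  have Q: "finite Q" "Q \<subseteq> {..<n}"
    using assms(1) j_le finite_subset by auto
  have "lookup (witness :: 'a mpoly) (monom_of_set Q)
      = (\<Sum>P\<in>small_sets. w P * (\<Sum>a\<in>Q. \<Sum>b\<in>Q - {a}. of_bool (P = Q - {a, b})))"
    unfolding witness_def lookup_sum lookup_single_zero_mult w_def
    by (intro sum.cong refl) (simp only: lookup_sqfree_part_monom_of_set[OF small_sets_finite Q])
  also have "\<dots> = (\<Sum>a\<in>Q. \<Sum>b\<in>Q - {a}. \<Sum>P\<in>small_sets. w P * of_bool (P = Q - {a, b}))"
    by (simp only: sum_distrib_left sum.swap[of _ small_sets])
  also have "\<dots> = (\<Sum>a\<in>Q. \<Sum>b\<in>Q - {a}. w (Q - {a, b}))"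
  proof (intro sum.cong refl)
    fix a b assume "a \<in> Q" "b \<in> Q - {a}"
    then have "Q - {a, b} \<in> small_sets"
      using assms Q(1) unfolding small_sets_def by (auto simp: card_Diff_subset)
    have "(\<Sum>P\<in>small_sets. w P * of_bool (P = Q - {a, b}))
        = (\<Sum>P\<in>small_sets. if P = Q - {a, b} then w P else 0)"
      by (intro sum.cong) auto
    also have "\<dots> = w (Q - {a, b})"
      using finite_small_sets \<open>Q - {a, b} \<in> small_sets\<close> by (simp add: sum.delta)
    finally show "(\<Sum>P\<in>small_sets. w P * of_bool (P = Q - {a, b})) = w (Q - {a, b})" .
  qed
  finally show ?thesis
    by (simp add: w_def)
qed

lemma card_inter_R:
  assumes "Q \<subseteq> {..<j}" "card Q = m"
  shows "card (Q \<inter> R) + card (Q - R) = m" "2 \<le> card (Q \<inter> R)"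
    and "card (Q \<inter> R) = m \<longleftrightarrow> Q = R"
proof -
  have "finite Q"
    using assms(1) by (rule finite_subset) simp
  then show sum: "card (Q \<inter> R) + card (Q - R) = m"
    using assms(2) by (metis Int_Diff_Un Int_Diff_disjoint card_Un_disjoint finite_Diff finite_Int)
  have "card (Q - R) \<le> j - m"
    using card_mono[of "{..<j} - R" "Q - R"] assms(1) R_subset card_R finite_R
    by (auto simp: card_Diff_subset)
  with sum show "2 \<le> card (Q \<inter> R)"
    using crowded two_le_m by arith
  show "card (Q \<inter> R) = m \<longleftrightarrow> Q = R"
  proof
    assume "card (Q \<inter> R) = m"
    then have "Q \<inter> R = Q" "Q \<inter> R = R"
      using \<open>finite Q\<close> finite_R assms(2) card_R by (simp_all add: card_subset_eq)
    then show "Q = R"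
      by simp
  qed (use card_R in simp)
qed

lemma lookup_witness_monom_of_set:
  assumes Q: "Q \<subseteq> {..<j}" "card Q = m"
  shows "lookup (witness :: 'a::field_char_0 mpoly) (monom_of_set Q) = of_bool (Q = R)"
proof -
  have "finite Q"
    using Q(1) by (rule finite_subset) simp
  obtain k where s: "card (Q \<inter> R) = k + 2"
    using card_inter_R(2)[OF Q] le_Suc_ex by (metis add.commute)
  then have t: "card (Q - R) = m - k - 2"
    using card_inter_R(1)[OF Q] by linarith
  have "lookup (witness :: 'a mpoly) (monom_of_set Q)
      = (\<Sum>a\<in>Q. \<Sum>b\<in>Q - {a}. witness_coeff m (card (Q \<inter> R) - (of_bool (a \<in> R) + of_bool (b \<in> R))))"
    unfolding lookup_witness_monom_of_set_eq_sum[OF Q]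
  proof (intro sum.cong refl)
    fix a b assume "a \<in> Q" "b \<in> Q - {a}"
    moreover have "(Q - {a, b}) \<inter> R = (Q \<inter> R) - {a, b}"
      by auto
    ultimately show "witness_coeff m (card ((Q - {a, b}) \<inter> R))
        = witness_coeff m (card (Q \<inter> R) - (of_bool (a \<in> R) + of_bool (b \<in> R)))"
      using \<open>finite Q\<close> by (simp add: card_Diff_pair)
  qed
  also have "\<dots> = of_nat (k + 2) * (of_nat (k + 2) - 1) * witness_coeff m k
      + 2 * of_nat (k + 2) * of_nat (m - k - 2) * witness_coeff m (k + 1)
      + of_nat (m - k - 2) * (of_nat (m - k - 2) - 1) * witness_coeff m (k + 2)"
    using sum_ordered_pairs_of_bool_mem[OF \<open>finite Q\<close>, of "\<lambda>i. witness_coeff m (card (Q \<inter> R) - i)" R]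
    by (simp add: s t numeral_2_eq_2)
  also have "\<dots> = of_bool (k + 2 = m)"
    using witness_coeff_rec[of k m] card_inter_R(1)[OF Q] s by (simp add: algebra_simps)
  finally show ?thesis
    using card_inter_R(3)[OF Q] s by simp
qed
lemma keys_witness:
  assumes "N \<in> keys (witness :: 'a::field mpoly)"
  obtains Q where "Q \<subseteq> {..<n}" "card Q = m" "N = monom_of_set Q"
proof -
  let ?f = "\<lambda>P. Poly_Mapping.single 0 (witness_coeff m (card (P \<inter> R))) * (sqfree_part n P :: 'a mpoly)"
  obtain P where P: "P \<in> small_sets" and "N \<in> keys (?f P)"
    using assms keys_sum[of ?f small_sets] unfolding witness_def by blast
  then have "N \<in> keys (sqfree_part n P :: 'a mpoly)"
    by (auto simp: in_keys_iff lookup_single_zero_mult)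
  then obtain a b where ab: "a < n" "b < n" "a \<noteq> b" "a \<notin> P" "b \<notin> P"
    and N: "N = monom_of_set P + var_monom a + var_monom b"
    using keys_sqfree_part by blast
  have "finite P"
    using P by (rule small_sets_finite)
  have "P \<subseteq> {..<n}" "card P = m - 2"
    using P j_le unfolding small_sets_def by auto
  show ?thesis
  proof (rule that[of "insert a (insert b P)"])
    show "insert a (insert b P) \<subseteq> {..<n}"
      using ab \<open>P \<subseteq> {..<n}\<close> by auto
    show "card (insert a (insert b P)) = m"
      using ab \<open>finite P\<close> \<open>card P = m - 2\<close> two_le_m by simp
    show "N = monom_of_set (insert a (insert b P))"
      using ab \<open>finite P\<close> by (simp add: N monom_of_set_insert ac_simps)
  qed
qed

lemma lead_mon_witness: "lead_mon (witness :: 'a::field_char_0 mpoly) = monom_of_set R"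
proof (rule lead_mon_eqI)
  show "monom_of_set R \<in> keys (witness :: 'a mpoly)"
    using lookup_witness_monom_of_set[OF R_subset card_R, where 'a = 'a] by (simp add: in_keys_iff)
next
  fix N assume N: "N \<in> keys (witness :: 'a mpoly)" "N \<noteq> monom_of_set R"
  obtain Q where Q: "Q \<subseteq> {..<n}" "card Q = m" "N = monom_of_set Q"
    using keys_witness[OF N(1)] by blast
  show "revlex_less N (monom_of_set R)"
  proof (cases "Q \<subseteq> {..<j}")
    case True
    have "Q \<noteq> R"
      using N(2) Q(3) by blast
    then show ?thesis
      using N(1) lookup_witness_monom_of_set[OF True Q(2), where 'a = 'a] Q(3) by (simp add: in_keys_iff)
  next
    case False
    then obtain x where "x \<in> Q" "j \<le> x"
      by (meson lessThan_iff not_le subsetI)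
    moreover have "finite Q"
      using Q(1) by (rule finite_subset) simp
    ultimately show ?thesis
      using Q R_subset finite_R card_R by (auto intro!: revlex_less_monom_of_set)
  qed
qed

theorem mon_R_in_initial_In: "(mon (monom_of_set R) :: 'a::field_char_0 mpoly) \<in> initial_ideal n (In n)"
proof -
  have "(witness :: 'a mpoly) \<noteq> 0"
    using lookup_witness_monom_of_set[OF R_subset card_R, where 'a = 'a] by auto
  from lead_mon_in_initial_ideal[OF witness_in_In this, of n] show ?thesis
    by (simp add: lead_mon_witness)
qed

end

section \<open>Ballot sets\<close>

definition ballot :: "nat set \<Rightarrow> bool" where
  "ballot S \<longleftrightarrow> (\<forall>v\<in>S. 2 * card (S \<inter> {..v}) \<le> v + 2)"

lemma ex_less_notin_of_card_less:
  assumes "finite X" "card X < v"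
  obtains a where "a < v" "a \<notin> X"
  using card_mono[OF assms(1), of "{..<v}"] assms(2) that by (metis card_lessThan not_le lessThan_iff subsetI)

lemma mon_in_initial_In_of_not_ballot:
  assumes S: "S \<subseteq> {..<n}" and "\<not> ballot S"
  shows "(mon (monom_of_set S) :: 'a::field_char_0 mpoly) \<in> initial_ideal n (In n)"
proof -
  have "finite S"
    using S by (rule finite_subset) simp
  obtain v where v: "v \<in> S" "2 * card (S \<inter> {..v}) > v + 2"
    using assms(2) unfolding ballot_def by (auto simp: not_le)
  define R where "R = S \<inter> {..v}"
  have "crowded_prefix n (v + 1) (card R) R"
    using v S unfolding R_def by unfold_locales auto
  then have "(mon (monom_of_set R) :: 'a mpoly) \<in> initial_ideal n (In n)"
    by (rule crowded_prefix.mon_R_in_initial_In)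
  moreover have "monom_of_set S = monom_of_set (S - R) + monom_of_set R"
    using \<open>finite S\<close> monom_of_set_union[of "S - R" R] unfolding R_def by (simp add: Un_absorb2 Int_commute)
  moreover have "keys (monom_of_set (S - R)) \<subseteq> {..<n}"
    using S \<open>finite S\<close> by (auto simp: keys_monom_of_set)
  ultimately show ?thesis
    using initial_ideal_mult_mon by metis
qed

lemma (in ballot_pairing) insert_greater:
  assumes "v < n" "\<And>x. x \<in> insert c B \<Longrightarrow> x < v"
    and "a < v" "a \<notin> insert c B" "a \<notin> \<beta> ` B"
  shows "ballot_pairing n c (insert v B) (\<beta>(v := a))"
proof
  have "v \<notin> B"
    using assms(2) by blast
  show "finite (insert v B)"
    using finite_B by simp
  show "inj_on (\<beta>(v := a)) (insert v B)"
    using inj_\<beta> \<open>v \<notin> B\<close> assms(5) by (auto simp: inj_on_def)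
  show "(\<beta>(v := a)) b < b" if "b \<in> insert v B" for b
    using that \<beta>_less assms(3) by auto
  show "c \<notin> insert v B"
    using c_notin_B assms(2) by blast
  show "(\<beta>(v := a)) b \<notin> insert c (insert v B)" if "b \<in> insert v B" for b
  proof (cases "b = v")
    case True
    then show ?thesis
      using assms(3,4) by auto
  next
    case False
    then have "b \<in> B"
      using that by simp
    then have "\<beta> b < v"
      using \<beta>_less assms(2) by (meson insertCI less_trans)
    then show ?thesis
      using \<beta>_notin[OF \<open>b \<in> B\<close>] False by auto
  qed
  show "c < n"
    by (rule c_less)
  show "b < n" if "b \<in> insert v B" for b
    using that B_less assms(1) by auto
qed

lemma (in ballot_pairing) extend_by_greater:
  assumes "ballot (insert v (insert c B))" "v < n" "\<And>x. x \<in> insert c B \<Longrightarrow> x < v"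
  obtains a where "ballot_pairing n c (insert v B) (\<beta>(v := a))"
proof -
  have "v \<notin> insert c B"
    using assms(3) by blast
  then have "insert v (insert c B) \<inter> {..v} = insert v (insert c B)"
    using less_imp_le[OF assms(3)] by auto
  then have "2 * card (insert v (insert c B)) \<le> v + 2"
    using assms(1) unfolding ballot_def by (metis insertI1)
  moreover have "card (insert c B \<union> \<beta> ` B) \<le> card (insert c B) + card B"
    using card_Un_le[of "insert c B" "\<beta> ` B"] card_image_le[OF finite_B, of \<beta>] by linarith
  ultimately have "card (insert c B \<union> \<beta> ` B) < v"
    using \<open>v \<notin> insert c B\<close> c_notin_B finite_B by simp
  then obtain a where "a < v" "a \<notin> insert c B \<union> \<beta> ` B"
    using ex_less_notin_of_card_less[of "insert c B \<union> \<beta> ` B" v] finite_B by blast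
  then show ?thesis
    using insert_greater[OF assms(2,3)] that by blast
qed

lemma ballot_pairing_exists:
  assumes "finite V" "V \<noteq> {}" "ballot V" "V \<subseteq> {..<n}"
  obtains c B \<beta> where "V = insert c B" "ballot_pairing n c B \<beta>"
proof -
  from assms(1) have "V \<noteq> {} \<Longrightarrow> ballot V \<Longrightarrow> V \<subseteq> {..<n}
    \<Longrightarrow> \<exists>c B \<beta>. V = insert c B \<and> ballot_pairing n c B \<beta>"
  proof (induction V rule: finite_linorder_max_induct)
    case empty
    then show ?case by simp
  next
    case (insert v A)
    show ?case
    proof (cases "A = {}")
      case True
      then have "ballot_pairing n v {} id"
        using insert.prems(3) by unfold_locales auto
      with True show ?thesis
        by blast
    next
      case False
      have "A \<inter> {..u} = insert v A \<inter> {..u}" if "u \<in> A" for u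
        using insert.hyps(2) that by auto
      then have "ballot A"
        using insert.prems(2) unfolding ballot_def by auto
      then obtain c B \<beta> where A: "A = insert c B" and pairing: "ballot_pairing n c B \<beta>"
        using insert.IH False insert.prems(3) by blast
      have "ballot (insert v (insert c B))" "v < n" "\<And>x. x \<in> insert c B \<Longrightarrow> x < v"
        using insert.prems(2,3) insert.hyps(2) A by auto
      then obtain a where "ballot_pairing n c (insert v B) (\<beta>(v := a))"
        by (rule ballot_pairing.extend_by_greater[OF pairing])
      with A show ?thesis
        by blast
    qed
  qed
  with assms that show ?thesis
    by blast
qed
lemma ballot_mon_notin_initial_In:
  assumes "finite V" "V \<noteq> {}" "ballot V" "V \<subseteq> {..<n}"
  shows "(mon (monom_of_set V) :: 'a::field_char_0 mpoly) \<notin> initial_ideal n (In n)"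
proof -
  obtain c B \<beta> where "V = insert c B" "ballot_pairing n c B \<beta>"
    using ballot_pairing_exists[OF assms] .
  then show ?thesis
    by (simp add: ballot_pairing.mon_\<nu>_notin_initial_In)
qed

text \<open>Every variable after the largest one \<open>i\<close> outside \<open>S\<close> lies in \<open>S\<close>, so an
  initial segment ending at some \<open>v \<ge> i\<close> misses exactly the \<open>n - 1 - v\<close> variables after it.\<close>
lemma ballot_insert_exists:
  assumes S: "S \<subseteq> {..<n}" and "ballot S" and "2 * card S + 2 \<le> n"
  obtains i where "i < n" "i \<notin> S" "ballot (insert i S)"
proof -
  have "finite S"
    using S by (rule finite_subset) simp
  then obtain i0 where "i0 < n" "i0 \<notin> S"
    using ex_less_notin_of_card_less[of S n] assms(3) by auto
  define i where "i = Max ({..<n} - S)"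
  have "i \<in> {..<n} - S"
    unfolding i_def by (rule Max_in) (use \<open>i0 < n\<close> \<open>i0 \<notin> S\<close> in auto)
  then have i: "i < n" "i \<notin> S"
    by auto
  have above_i: "k \<in> S" if "i < k" "k < n" for k
    using Max_ge[of "{..<n} - S" k] that unfolding i_def by fastforce
  let ?V = "insert i S"
  have "2 * card (?V \<inter> {..v}) \<le> v + 2" if v: "v \<in> ?V" for v
  proof (cases "v < i")
    case True
    then have "v \<in> S" "?V \<inter> {..v} = S \<inter> {..v}"
      using v by auto
    then show ?thesis
      using assms(2) unfolding ballot_def by simp
  next
    case False
    have "v < n"
      using v S i(1) by auto
    have "?V = (?V \<inter> {..v}) \<union> {v<..<n}" "(?V \<inter> {..v}) \<inter> {v<..<n} = {}"
      using above_i False S i(1) by auto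
    then have "card ?V = card (?V \<inter> {..v}) + (n - Suc v)"
      using \<open>finite S\<close> by (metis card_Un_disjoint card_greaterThanLessThan finite_Int finite_greaterThanLessThan
          finite_insert)
    moreover have "card ?V = card S + 1"
      using \<open>finite S\<close> i(2) by simp
    ultimately show ?thesis
      using assms(3) \<open>v < n\<close> by linarith
  qed
  then show ?thesis
    using that i unfolding ballot_def by blast
qed

theorem mainTheorem6:
  fixes d n :: nat and \<mu> :: monom
  assumes "d \<ge> 2" and "n = 2 * d - 2"
    and "is_monomial_in n \<mu>" and "mdeg \<mu> \<le> d - 2"
    and "(mon \<mu> :: 'a::field_char_0 mpoly) \<notin> initial_ideal n (In n)"
  shows "\<exists>\<mu>'. is_monomial_in n \<mu>' \<and> (\<exists>q\<in>Pn n. (mon \<mu>' :: 'a mpoly) = q * mon \<mu>)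
           \<and> mdeg \<mu>' = mdeg \<mu> + 1 \<and> (mon \<mu>' :: 'a mpoly) \<notin> initial_ideal n (In n)"
proof -
  have S: "keys \<mu> \<subseteq> {..<n}"
    using assms(3) unfolding is_monomial_in_def .
  have \<mu>: "\<mu> = monom_of_set (keys \<mu>)"
    using monom_of_set_keys_of_notin_initial_In[OF S assms(5)] .
  then have "ballot (keys \<mu>)"
    using mon_in_initial_In_of_not_ballot[OF S] assms(5) by metis
  moreover have "2 * card (keys \<mu>) + 2 \<le> n"
    using mdeg_monom_of_set[of "keys \<mu>"] \<mu> assms(1,2,4) by simp
  ultimately obtain i where i: "i < n" "i \<notin> keys \<mu>" "ballot (insert i (keys \<mu>))"
    using ballot_insert_exists[OF S] by blast
  have "monom_of_set (insert i (keys \<mu>)) = var_monom i + \<mu>"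
    using i(2) \<mu> by (simp add: monom_of_set_insert)
  then have "(mon (var_monom i + \<mu>) :: 'a mpoly) \<notin> initial_ideal n (In n)"
    using ballot_mon_notin_initial_In[of "insert i (keys \<mu>)" n] i S by auto
  moreover have "is_monomial_in n (var_monom i + \<mu>)"
    using S i(1) by (auto simp: is_monomial_in_def keys_add_monom)
  moreover have "var i \<in> Pn n"
    using i(1) by (simp add: var_eq_mon mon_def Pn_single)
  moreover have "mon (var_monom i + \<mu>) = var i * (mon \<mu> :: 'a mpoly)"
    by (simp add: var_eq_mon mon_add)
  moreover have "mdeg (var_monom i + \<mu>) = mdeg \<mu> + 1"
    by (simp add: mdeg_add)
  ultimately show ?thesis
    by auto
qed

end
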